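(* Let $N\ge 3$, $M\ge 2$, $L\ge 1$ be integers, $P>0$, $\tau\in(0,1)$, $\sigma_r>0$, $c_3\in\mathbb{C}\setminus\{0\}$, and $\alpha,\beta\in\mathbb{C}$ with $|\alpha|^2+|\beta|^2=1$ and $\alpha\neq 0$. Let $\theta\in(-\pi/2,\pi/2)$ and $\mathbf{h}=[h_1,\dots,h_N]^T\in\mathbb{C}^N$ not in the span of $\mathbf{a}(\theta)$. Construct $\tilde{\mathbf{a}}=\mathbf{a}/\|\mathbf{a}\|$, $\tilde{\mathbf{h}}=\frac{\mathbf{h}-(\tilde{\mathbf{a}}^H\mathbf{h})\tilde{\mathbf{a}}}{\|\mathbf{h}-(\tilde{\mathbf{a}}^H\mathbf{h})\tilde{\mathbf{a}}\|}$, $\mathbf{t}_1=\alpha\tilde{\mathbf{a}}+\beta\tilde{\mathbf{h}}$, let $\mathbf{t}_3,\dots,\mathbf{t}_N$ be an orthonormal basis of the orthogonal complement of $\mathrm{span}\{\tilde{\mathbf{a}},\tilde{\mathbf{h}}\}$, and set $$\mathbf{R}_x=P\tau\,\mathbf{t}_1\mathbf{t}_1^H+\frac{(1-\tau)P}{N-2}\sum_{i=3}^N\mathbf{t}_i\mathbf{t}_i^H .$$ Define $\mathrm{CRB}(\theta)=\dfrac{Q}{\|\mathbf{b}'\|^2\mathbf{a}^H\mathbf{R}_x\mathbf{a}+\|\mathbf{b}\|^2\mathbf{a}'^H\mathbf{R}_x\mathbf{a}'-\frac{|\|\mathbf{b}\|^2\mathbf{a}^H\mathbf{R}_x\mathbf{a}'|^2}{\|\mathbf{b}\|^2\mathbf{a}^H\mathbf{R}_x\mathbf{a}}}$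 with $Q=\frac{\sigma_r^2}{2|c_3|^2L}$. Then $$\mathrm{CRB}(\theta)=Q\Big[\gamma_1\|\mathbf{b}'\|^2N|\alpha|^2+\gamma_2M\Big(\|\mathbf{a}'\|^2-\frac{(\sum_{i=1}^N -f_i't_i)^2+(\sum_{i=1}^N f_i'r_i)^2}{K-\frac1N(T^2+R^2)}\Big)\Big]^{-1},$$ where $\gamma_1=P\tau$, $\gamma_2=\frac{(1-\tau)P}{N-2}$, $f_i=\pi\sin(\theta)\frac{N-(2i-1)}{2}$, $f_i'=\pi\cos(\theta)\frac{N-(2i-1)}{2}$, $r_i=\mathrm{Re}(e^{jf_i}h_i)$, $t_i=\mathrm{Im}(e^{jf_i}h_i)$, $k_i=|h_i|^2$, $R=\sum_i r_i$, $T=\sum_i t_i$, $K=\sum_i k_i$, and $\|\mathbf{b}'\|^2=\frac{\pi^2\cos^2(\theta)M(M^2-1)}{12}$, $\|\mathbf{a}'\|^2=\frac{\pi^2\cos^2(\theta)N(N^2-1)}{12}$. Moreover, if $h_1,\dots,h_N$ are i.i.d. $\mathcal{CN}(0,1)$ and $\theta\sim\mathcal{U}(-\pi/2,\pi/2)$ independent of $\mathbf{h}$, then for every $\epsilon>0$, $P(\mathrm{CRB}(\theta)>\epsilon)\ge P_{Lc}(\epsilon)$, where, with $$u(\epsilon)=\sqrt6\,\sigma_r\Big(\epsilon MN\pi^2LP|c_3|^2\big(|\alpha|^2\tau(M^2-1)+\tfrac{(N^2-1)(1-\tau)}{N-2}\big)\Big)^{-1/2},$$ $P_{Lc}(\epsilon)=\frac{2}{\pi}\sin^{-1}(u(\epsilon))$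 when $u(\epsilon)<1$ and $P_{Lc}(\epsilon)=0$ otherwise.
   Context: $j=\sqrt{-1}$. $\mathbf{a}(\theta)\in\mathbb{C}^N$ has $i$-th entry $e^{-jf_i}$ with $f_i=\pi\sin(\theta)\frac{N-(2i-1)}{2}$; $\mathbf{b}(\theta)\in\mathbb{C}^M$ has $i$-th entry $e^{-j\pi\sin(\theta)\frac{M-(2i-1)}{2}}$; $\mathbf{a}'$, $\mathbf{b}'$ are derivatives with respect to $\theta$. This is the "SSJB" precoding scheme: $\mathbf{R}_x$ is the transmit covariance of the base station with total power $P$, fraction $\tau$ on user data. *)

theory Defs
  imports "HOL-Probability.Probability"
begin

text \<open>Vectors in C^N are functions nat => complex, indexed by 1..N.\<close>

definition fphase :: "nat \<Rightarrow> real \<Rightarrow> nat \<Rightarrow> real" where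
  "fphase N \<theta> i = pi * sin \<theta> * (real N - (2 * real i - 1)) / 2"

definition fphase' :: "nat \<Rightarrow> real \<Rightarrow> nat \<Rightarrow> real" where
  "fphase' N \<theta> i = pi * cos \<theta> * (real N - (2 * real i - 1)) / 2"

definition steer :: "nat \<Rightarrow> real \<Rightarrow> nat \<Rightarrow> complex" where
  "steer N \<theta> i = exp (- \<i> * complex_of_real (fphase N \<theta> i))"

definition steer' :: "nat \<Rightarrow> real \<Rightarrow> nat \<Rightarrow> complex" where
  "steer' N \<theta> i = vector_derivative (\<lambda>t. steer N t i) (at \<theta>)"

definition cinner :: "nat \<Rightarrow> (nat \<Rightarrow> complex) \<Rightarrow> (nat \<Rightarrow> complex) \<Rightarrow> complex" where
  "cinner N u v = (\<Sum>i=1..N. cnj (u i) * v i)"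

definition cnorm2 :: "nat \<Rightarrow> (nat \<Rightarrow> complex) \<Rightarrow> real" where
  "cnorm2 N u = (\<Sum>i=1..N. (cmod (u i))^2)"

definition qform :: "nat \<Rightarrow> (nat \<Rightarrow> complex) \<Rightarrow> (nat \<Rightarrow> nat \<Rightarrow> complex) \<Rightarrow> (nat \<Rightarrow> complex) \<Rightarrow> complex" where
  "qform N u R v = (\<Sum>i=1..N. \<Sum>k=1..N. cnj (u i) * R i k * v k)"

definition atil :: "nat \<Rightarrow> real \<Rightarrow> nat \<Rightarrow> complex" where
  "atil N \<theta> i = steer N \<theta> i / complex_of_real (sqrt (cnorm2 N (steer N \<theta>)))"

definition hperp :: "nat \<Rightarrow> real \<Rightarrow> (nat \<Rightarrow> complex) \<Rightarrow> nat \<Rightarrow> complex" where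
  "hperp N \<theta> h i = h i - cinner N (atil N \<theta>) h * atil N \<theta> i"

definition htil :: "nat \<Rightarrow> real \<Rightarrow> (nat \<Rightarrow> complex) \<Rightarrow> nat \<Rightarrow> complex" where
  "htil N \<theta> h i = hperp N \<theta> h i / complex_of_real (sqrt (cnorm2 N (hperp N \<theta> h)))"

definition tvec1 :: "nat \<Rightarrow> complex \<Rightarrow> complex \<Rightarrow> real \<Rightarrow> (nat \<Rightarrow> complex) \<Rightarrow> nat \<Rightarrow> complex" where
  "tvec1 N \<alpha> \<beta> \<theta> h i = \<alpha> * atil N \<theta> i + \<beta> * htil N \<theta> h i"

definition in_span_a :: "nat \<Rightarrow> real \<Rightarrow> (nat \<Rightarrow> complex) \<Rightarrow> bool" where
  "in_span_a N \<theta> h = (\<exists>c. \<forall>i\<in>{1..N}. h i = c * steer N \<theta> i)"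

definition is_compl_onb :: "nat \<Rightarrow> real \<Rightarrow> (nat \<Rightarrow> complex) \<Rightarrow> (nat \<Rightarrow> nat \<Rightarrow> complex) \<Rightarrow> bool" where
  "is_compl_onb N \<theta> h t \<longleftrightarrow>
     (\<forall>l\<in>{3..N}. \<forall>m\<in>{3..N}. cinner N (t l) (t m) = (if l = m then 1 else 0)) \<and>
     (\<forall>l\<in>{3..N}. cinner N (atil N \<theta>) (t l) = 0 \<and> cinner N (htil N \<theta> h) (t l) = 0) \<and>
     (\<forall>v. cinner N (atil N \<theta>) v = 0 \<and> cinner N (htil N \<theta> h) v = 0 \<longrightarrow>
        (\<exists>c. \<forall>i\<in>{1..N}. v i = (\<Sum>l=3..N. c l * t l i)))"

definition Rx :: "nat \<Rightarrow> real \<Rightarrow> real \<Rightarrow> complex \<Rightarrow> complex \<Rightarrow> real \<Rightarrow> (nat \<Rightarrow> complex)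
                  \<Rightarrow> (nat \<Rightarrow> nat \<Rightarrow> complex) \<Rightarrow> nat \<Rightarrow> nat \<Rightarrow> complex" where
  "Rx N P \<tau> \<alpha> \<beta> \<theta> h t i k =
     complex_of_real (P * \<tau>) * tvec1 N \<alpha> \<beta> \<theta> h i * cnj (tvec1 N \<alpha> \<beta> \<theta> h k)
     + complex_of_real ((1 - \<tau>) * P / (real N - 2)) * (\<Sum>l=3..N. t l i * cnj (t l k))"

definition crbQ :: "real \<Rightarrow> complex \<Rightarrow> nat \<Rightarrow> real" where
  "crbQ \<sigma> c3 L = \<sigma>^2 / (2 * (cmod c3)^2 * real L)"

definition CRB :: "nat \<Rightarrow> nat \<Rightarrow> nat \<Rightarrow> real \<Rightarrow> real \<Rightarrow> real \<Rightarrow> complex \<Rightarrow> complex \<Rightarrow> complex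
                   \<Rightarrow> real \<Rightarrow> (nat \<Rightarrow> complex) \<Rightarrow> (nat \<Rightarrow> nat \<Rightarrow> complex) \<Rightarrow> complex" where
  "CRB N M L P \<tau> \<sigma> c3 \<alpha> \<beta> \<theta> h t =
    (let R = Rx N P \<tau> \<alpha> \<beta> \<theta> h t;
         a = steer N \<theta>; a' = steer' N \<theta>;
         nb = complex_of_real (cnorm2 M (steer M \<theta>));
         nb' = complex_of_real (cnorm2 M (steer' M \<theta>))
     in complex_of_real (crbQ \<sigma> c3 L) /
        (nb' * qform N a R a + nb * qform N a' R a'
         - complex_of_real ((cmod (nb * qform N a R a'))^2) / (nb * qform N a R a)))"

definition uLc :: "nat \<Rightarrow> nat \<Rightarrow> nat \<Rightarrow> real \<Rightarrow> real \<Rightarrow> real \<Rightarrow> complex \<Rightarrow> complex \<Rightarrow> real \<Rightarrow> real" where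
  "uLc N M L P \<tau> \<sigma> c3 \<alpha> \<epsilon> =
     sqrt 6 * \<sigma> * inverse (sqrt (\<epsilon> * real M * real N * pi^2 * real L * P * (cmod c3)^2 *
        ((cmod \<alpha>)^2 * \<tau> * (real M ^ 2 - 1) + (real N ^ 2 - 1) * (1 - \<tau>) / (real N - 2))))"

definition PLc :: "nat \<Rightarrow> nat \<Rightarrow> nat \<Rightarrow> real \<Rightarrow> real \<Rightarrow> real \<Rightarrow> complex \<Rightarrow> complex \<Rightarrow> real \<Rightarrow> real" where
  "PLc N M L P \<tau> \<sigma> c3 \<alpha> \<epsilon> =
     (let u = uLc N M L P \<tau> \<sigma> c3 \<alpha> \<epsilon> in if u < 1 then 2 / pi * arcsin u else 0)"

definition CN01 :: "complex measure" where
  "CN01 = density lborel (\<lambda>z. ennreal (exp (- ((cmod z)^2)) / pi))"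

definition joint_law :: "nat \<Rightarrow> (real \<times> (nat \<Rightarrow> complex)) measure" where
  "joint_law N = uniform_measure lborel {-pi/2<..<pi/2} \<Otimes>\<^sub>M (\<Pi>\<^sub>M i\<in>{1..N}. CN01)"

end

theory Submission
  imports Defs
begin

text \<open>
  Write a, a' for a(theta), a'(theta). The phase offsets f_i are centred, so a is orthogonal to a',
  and atil, htil, t_3, ..., t_N is an orthonormal basis in which a has only an atil-component.
  Hence a^H R_x a = gamma_1 |alpha|^2 N, and in the Schur complement
  a'^H R_x a' - |a^H R_x a'|^2 / (a^H R_x a) the whole t_1-contribution cancels, leaving
  gamma_2 sum_l |t_l^H a'|^2 = gamma_2 (|a'|^2 - |htil^H a'|^2) by Parseval; Gram-Schmidt expresses
  |htil^H a'|^2 through r_i, t_i and k_i.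

  For the tail bound, Bessel's inequality gives 0 <= |htil^H a'|^2 <= |a'|^2, and |a'|^2, |b'|^2 are
  proportional to cos^2 theta, so CRB(theta) > epsilon as soon as cos theta < u(epsilon); this is
  exactly how u(epsilon) is chosen. Under the uniform law this event has probability
  (2/pi) arcsin u(epsilon), while h lies in the span of a(theta) only on a null set, because then
  h_2 is a fixed multiple of h_1.
\<close>

section \<open>Steering vectors\<close>

lemma cnj_steer: "cnj (steer N \<theta> i) = exp (\<i> * complex_of_real (fphase N \<theta> i))"
  unfolding steer_def exp_cnj by simp

lemma norm_steer [simp]: "cmod (steer N \<theta> i) = 1"
  unfolding steer_def by (simp add: norm_exp_i_times)

lemma steer_nonzero [simp]: "steer N \<theta> i \<noteq> 0"
  unfolding steer_def by simp

lemma cnj_steer_mult_steer: "cnj (steer N \<theta> i) * steer N \<theta> i = 1"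
  using complex_norm_square[of "steer N \<theta> i"] by (simp add: mult.commute)

lemma sum_odd_offsets: "(\<Sum>i=1..n. c - (2 * real i - 1)) = real n * c - (real n)^2"
  by (induction n) (simp_all add: algebra_simps power2_eq_square)

lemma sum_odd_offsets_sq:
  "(\<Sum>i=1..n. (c - (2 * real i - 1))^2) = real n * c^2 - 2 * c * (real n)^2 + real n * (4 * (real n)^2 - 1) / 3"
  by (induction n) (simp_all add: field_simps power2_eq_square)

lemma sum_fphase': "(\<Sum>i=1..N. fphase' N \<theta> i) = 0"
proof -
  have "(\<Sum>i=1..N. fphase' N \<theta> i) = pi * cos \<theta> / 2 * (\<Sum>i=1..N. real N - (2 * real i - 1))"
    unfolding fphase'_def sum_distrib_left by simp
  then show ?thesis unfolding sum_odd_offsets by (simp add: power2_eq_square)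
qed

lemma sum_fphase'_sq: "(\<Sum>i=1..N. (fphase' N \<theta> i)^2) = pi^2 * (cos \<theta>)^2 * real N * (real N ^ 2 - 1) / 12"
proof -
  have "(\<Sum>i=1..N. (fphase' N \<theta> i)^2) = pi^2 * (cos \<theta>)^2 / 4 * (\<Sum>i=1..N. (real N - (2 * real i - 1))^2)"
    unfolding fphase'_def sum_distrib_left by (simp add: power_mult_distrib power_divide)
  then show ?thesis
    unfolding sum_odd_offsets_sq by (simp add: field_simps power2_eq_square power3_eq_cube)
qed

lemma steer'_eq: "steer' N \<theta> i = - \<i> * complex_of_real (fphase' N \<theta> i) * steer N \<theta> i"
proof -
  define c where "c = real N - (2 * real i - 1)"
  define F where "F = (\<lambda>z::complex. exp (- \<i> * (of_real pi * sin z * of_real c / 2)))"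
  have steer_F: "(\<lambda>t. steer N t i) = (\<lambda>t. F (of_real t))"
    by (rule ext) (simp add: F_def steer_def fphase_def c_def sin_of_real)
  define d where "d = - \<i> * (of_real pi * cos (of_real \<theta>) * of_real c / 2)"
  have "(F has_field_derivative d * F (of_real \<theta>)) (at (of_real \<theta>))"
    unfolding F_def d_def by (auto intro!: derivative_eq_intros simp: algebra_simps)
  then have "((\<lambda>t. F (of_real t)) has_vector_derivative d * F (of_real \<theta>)) (at \<theta>)"
    by (rule has_vector_derivative_real_field)
  then show ?thesis unfolding steer'_def steer_F
    by (subst vector_derivative_at)
      (auto simp: d_def F_def steer_def fphase'_def fphase_def c_def cos_of_real sin_of_real)
qed

lemma cnorm2_steer [simp]: "cnorm2 N (steer N \<theta>) = real N"
  unfolding cnorm2_def by simp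

lemma cnorm2_steer': "cnorm2 N (steer' N \<theta>) = pi^2 * (cos \<theta>)^2 * real N * (real N ^ 2 - 1) / 12"
proof -
  have "cnorm2 N (steer' N \<theta>) = (\<Sum>i=1..N. (fphase' N \<theta> i)^2)"
    unfolding cnorm2_def steer'_eq by (simp add: norm_mult)
  then show ?thesis unfolding sum_fphase'_sq .
qed

section \<open>The inner product on C^N\<close>

lemma cnj_cinner: "cnj (cinner N u v) = cinner N v u"
  unfolding cinner_def by (simp add: mult.commute)

lemma cinner_self: "cinner N u u = complex_of_real (cnorm2 N u)"
  unfolding cinner_def cnorm2_def of_real_sum
  by (simp add: complex_norm_square mult.commute del: of_real_power)

lemma cinner_cong: "(\<And>i. i \<in> {1..N} \<Longrightarrow> v i = w i) \<Longrightarrow> cinner N u v = cinner N u w"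
  unfolding cinner_def by simp

lemma cinner_add_right: "cinner N u (\<lambda>i. x i + y i) = cinner N u x + cinner N u y"
  unfolding cinner_def by (simp add: sum.distrib algebra_simps)

lemma cinner_diff_right: "cinner N u (\<lambda>i. x i - y i) = cinner N u x - cinner N u y"
  unfolding cinner_def by (simp add: sum_subtractf algebra_simps)

lemma cinner_scale_right: "cinner N u (\<lambda>i. c * x i) = c * cinner N u x"
  unfolding cinner_def by (simp add: sum_distrib_left algebra_simps)

lemma cinner_divide_right: "cinner N u (\<lambda>i. x i / c) = cinner N u x / c"
  unfolding cinner_def by (simp add: sum_divide_distrib)

lemma cinner_sum_right: "cinner N u (\<lambda>i. \<Sum>l\<in>A. x l i) = (\<Sum>l\<in>A. cinner N u (x l))"
  unfolding cinner_def by (simp add: sum_distrib_left sum.swap[of _ A])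

lemma cinner_add_left: "cinner N (\<lambda>i. x i + y i) v = cinner N x v + cinner N y v"
  unfolding cinner_def by (simp add: sum.distrib algebra_simps)

lemma cinner_diff_left: "cinner N (\<lambda>i. x i - y i) v = cinner N x v - cinner N y v"
  unfolding cinner_def by (simp add: sum_subtractf algebra_simps)

lemma cinner_scale_left: "cinner N (\<lambda>i. c * x i) v = cnj c * cinner N x v"
  unfolding cinner_def by (simp add: sum_distrib_left algebra_simps)

lemma cinner_divide_left: "cinner N (\<lambda>i. x i / c) v = cinner N x v / cnj c"
  unfolding cinner_def by (simp add: sum_divide_distrib)

lemmas cinner_linear =
  cinner_add_right cinner_diff_right cinner_scale_right cinner_divide_right cinner_sum_right
  cinner_add_left cinner_diff_left cinner_scale_left cinner_divide_left

lemma projection_orthogonal: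
  assumes "cinner N e e = 1"
  shows "cinner N e (\<lambda>i. v i - cinner N e v * e i) = 0"
  using assms by (simp add: cinner_linear)

lemma cnorm2_minus_projection:
  assumes "cinner N e e = 1"
  shows "cnorm2 N (\<lambda>i. v i - cinner N e v * e i) = cnorm2 N v - (cmod (cinner N e v))^2"
proof -
  let ?w = "\<lambda>i. v i - cinner N e v * e i"
  have "cinner N ?w e = 0"
    using projection_orthogonal[OF assms, of v] cnj_cinner[of N e ?w] by simp
  then have "cinner N ?w ?w = cinner N ?w v"
    by (simp add: cinner_linear)
  also have "\<dots> = complex_of_real (cnorm2 N v - (cmod (cinner N e v))^2)"
    by (simp add: cinner_linear cinner_self cnj_cinner complex_norm_square del: of_real_power)
  finally show ?thesis unfolding cinner_self of_real_eq_iff .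
qed

lemma cnorm2_nonneg: "cnorm2 N u \<ge> 0"
  unfolding cnorm2_def by (simp add: sum_nonneg)

lemma bessel_inequality:
  assumes "cinner N e e = 1"
  shows "(cmod (cinner N e v))^2 \<le> cnorm2 N v"
  using cnorm2_minus_projection[OF assms, of v] cnorm2_nonneg[of N "\<lambda>i. v i - cinner N e v * e i"]
  by linarith

context
  fixes N :: nat and e1 e2 :: "nat \<Rightarrow> complex" and t :: "nat \<Rightarrow> nat \<Rightarrow> complex"
  assumes e1_unit: "cinner N e1 e1 = 1" and e2_unit: "cinner N e2 e2 = 1"
    and e1_e2: "cinner N e1 e2 = 0"
    and t_orthonormal: "\<forall>l\<in>{3..N}. \<forall>m\<in>{3..N}. cinner N (t l) (t m) = (if l = m then 1 else 0)"
    and t_orthogonal: "\<forall>l\<in>{3..N}. cinner N e1 (t l) = 0 \<and> cinner N e2 (t l) = 0"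
    and t_complete: "\<forall>v. cinner N e1 v = 0 \<and> cinner N e2 v = 0 \<longrightarrow>
        (\<exists>c. \<forall>i\<in>{1..N}. v i = (\<Sum>l=3..N. c l * t l i))"
begin

lemma orthonormal_expansion:
  assumes "i \<in> {1..N}"
  shows "v i = cinner N e1 v * e1 i + cinner N e2 v * e2 i + (\<Sum>l=3..N. cinner N (t l) v * t l i)"
proof -
  define w where "w = (\<lambda>i. v i - cinner N e1 v * e1 i - cinner N e2 v * e2 i)"
  have "cinner N e2 e1 = 0" using e1_e2 cnj_cinner[of N e1 e2] by simp
  then have "cinner N e1 w = 0" "cinner N e2 w = 0"
    unfolding w_def using e1_unit e2_unit e1_e2 by (simp_all add: cinner_linear)
  then obtain c where c: "\<forall>i\<in>{1..N}. w i = (\<Sum>l=3..N. c l * t l i)"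
    using t_complete by blast
  have "c m = cinner N (t m) v" if m: "m \<in> {3..N}" for m
  proof -
    have "cinner N (t m) e1 = 0" "cinner N (t m) e2 = 0"
      using t_orthogonal m cnj_cinner[of N e1 "t m"] cnj_cinner[of N e2 "t m"] by auto
    then have "cinner N (t m) v = cinner N (t m) w"
      unfolding w_def by (simp add: cinner_linear)
    also have "\<dots> = cinner N (t m) (\<lambda>i. \<Sum>l=3..N. c l * t l i)"
      using c by (intro cinner_cong) simp
    also have "\<dots> = (\<Sum>l=3..N. if l = m then c l else 0)"
      unfolding cinner_linear using t_orthonormal m by (intro sum.cong) auto
    also have "\<dots> = c m" using m by (simp add: sum.delta')
    finally show ?thesis ..
  qed
  then have "w i = (\<Sum>l=3..N. cinner N (t l) v * t l i)" using c assms by simp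
  then show ?thesis unfolding w_def by (simp add: algebra_simps)
qed

lemma parseval:
  "cnorm2 N v = (cmod (cinner N e1 v))^2 + (cmod (cinner N e2 v))^2 + (\<Sum>l=3..N. (cmod (cinner N (t l) v))^2)"
proof -
  have "cinner N v v = cinner N v (\<lambda>i. cinner N e1 v * e1 i + cinner N e2 v * e2 i + (\<Sum>l=3..N. cinner N (t l) v * t l i))"
    by (intro cinner_cong orthonormal_expansion)
  also have "\<dots> = complex_of_real ((cmod (cinner N e1 v))^2 + (cmod (cinner N e2 v))^2 + (\<Sum>l=3..N. (cmod (cinner N (t l) v))^2))"
    by (simp add: cinner_linear cnj_cinner complex_norm_square del: of_real_power)
  finally show ?thesis unfolding cinner_self of_real_eq_iff .
qed

end

section \<open>The Gram-Schmidt basis\<close>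

lemma atil_fun: "atil N \<theta> = (\<lambda>i. steer N \<theta> i / complex_of_real (sqrt (real N)))"
  unfolding atil_def[abs_def] cnorm2_steer ..

lemma cinner_atil_atil: "N > 0 \<Longrightarrow> cinner N (atil N \<theta>) (atil N \<theta>) = 1"
  unfolding atil_fun by (simp add: cinner_linear cinner_self flip: of_real_mult)

lemma cinner_steer_left:
  "N > 0 \<Longrightarrow> cinner N (steer N \<theta>) v = complex_of_real (sqrt (real N)) * cinner N (atil N \<theta>) v"
  unfolding atil_fun by (simp add: cinner_linear)

lemma tvec1_fun: "tvec1 N \<alpha> \<beta> \<theta> h = (\<lambda>i. \<alpha> * atil N \<theta> i + \<beta> * htil N \<theta> h i)"
  unfolding tvec1_def[abs_def] ..

lemma cinner_steer_steer': "cinner N (steer N \<theta>) (steer' N \<theta>) = 0"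
proof -
  have "cinner N (steer N \<theta>) (steer' N \<theta>) = - \<i> * complex_of_real (\<Sum>i=1..N. fphase' N \<theta> i)"
    unfolding cinner_def steer'_eq of_real_sum sum_distrib_left
    by (rule sum.cong) (simp_all add: mult.left_commute[of "cnj _"] cnj_steer_mult_steer)
  then show ?thesis unfolding sum_fphase' by simp
qed

lemma cinner_atil_steer': "cinner N (atil N \<theta>) (steer' N \<theta>) = 0"
  unfolding atil_fun by (simp add: cinner_linear cinner_steer_steer')

lemma hperp_fun: "hperp N \<theta> h = (\<lambda>i. h i - cinner N (atil N \<theta>) h * atil N \<theta> i)"
  unfolding hperp_def[abs_def] ..

lemma htil_fun: "htil N \<theta> h = (\<lambda>i. hperp N \<theta> h i / complex_of_real (sqrt (cnorm2 N (hperp N \<theta> h))))"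
  unfolding htil_def[abs_def] ..

lemma cnorm2_hperp_pos:
  assumes "\<not> in_span_a N \<theta> h"
  shows "cnorm2 N (hperp N \<theta> h) > 0"
proof (rule ccontr)
  assume "\<not> ?thesis"
  then have "cnorm2 N (hperp N \<theta> h) = 0" using cnorm2_nonneg[of N "hperp N \<theta> h"] by linarith
  then have "\<forall>i\<in>{1..N}. hperp N \<theta> h i = 0"
    unfolding cnorm2_def by (subst (asm) sum_nonneg_eq_0_iff) auto
  then have "\<forall>i\<in>{1..N}. h i = (cinner N (atil N \<theta>) h / complex_of_real (sqrt (real N))) * steer N \<theta> i"
    unfolding hperp_fun atil_fun by auto
  then show False using assms unfolding in_span_a_def by blast
qed

lemma cinner_atil_htil: "N > 0 \<Longrightarrow> cinner N (atil N \<theta>) (htil N \<theta> h) = 0"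
  unfolding htil_fun hperp_fun by (simp add: cinner_divide_right projection_orthogonal cinner_atil_atil)

lemma cinner_htil_htil:
  assumes "\<not> in_span_a N \<theta> h"
  shows "cinner N (htil N \<theta> h) (htil N \<theta> h) = 1"
  using cnorm2_hperp_pos[OF assms] unfolding htil_fun
  by (simp add: cinner_linear cinner_self flip: of_real_mult)

lemma cinner_htil_left:
  assumes "cinner N (atil N \<theta>) v = 0"
  shows "cinner N (htil N \<theta> h) v = cinner N h v / complex_of_real (sqrt (cnorm2 N (hperp N \<theta> h)))"
  unfolding htil_fun hperp_fun using assms by (simp add: cinner_linear)

lemma cinner_atil_coords:
  "cinner N (atil N \<theta>) h = (complex_of_real (\<Sum>i=1..N. Re (exp (\<i> * complex_of_real (fphase N \<theta> i)) * h i))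
     + \<i> * complex_of_real (\<Sum>i=1..N. Im (exp (\<i> * complex_of_real (fphase N \<theta> i)) * h i)))
     / complex_of_real (sqrt (real N))"
proof -
  have "cinner N (atil N \<theta>) h = (\<Sum>i=1..N. exp (\<i> * complex_of_real (fphase N \<theta> i)) * h i) / complex_of_real (sqrt (real N))"
    unfolding atil_fun cinner_divide_left unfolding cinner_def cnj_steer by simp
  then show ?thesis by (simp add: complex_eq_iff Re_sum Im_sum)
qed

lemma cnorm2_hperp_coords:
  assumes "N > 0"
  shows "cnorm2 N (hperp N \<theta> h) = (\<Sum>i=1..N. (cmod (h i))^2)
    - ((\<Sum>i=1..N. Im (exp (\<i> * complex_of_real (fphase N \<theta> i)) * h i))^2
       + (\<Sum>i=1..N. Re (exp (\<i> * complex_of_real (fphase N \<theta> i)) * h i))^2) / real N"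
proof -
  have "cnorm2 N (hperp N \<theta> h) = cnorm2 N h - (cmod (cinner N (atil N \<theta>) h))^2"
    unfolding hperp_fun by (rule cnorm2_minus_projection[OF cinner_atil_atil[OF assms]])
  then show ?thesis
    using assms by (simp add: cinner_atil_coords cnorm2_def norm_divide power_divide cmod_power2 add.commute)
qed

lemma cinner_steer'_coords:
  "cinner N h (steer' N \<theta>) =
     complex_of_real (\<Sum>i=1..N. - fphase' N \<theta> i * Im (exp (\<i> * complex_of_real (fphase N \<theta> i)) * h i))
     - \<i> * complex_of_real (\<Sum>i=1..N. fphase' N \<theta> i * Re (exp (\<i> * complex_of_real (fphase N \<theta> i)) * h i))"
  unfolding cinner_def steer'_eq of_real_sum sum_distrib_left sum_subtractf[symmetric]
  by (rule sum.cong) (simp_all add: complex_eq_iff cnj_steer[symmetric] algebra_simps)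

lemma cmod_cinner_htil_steer'_sq:
  assumes "N > 0" and "\<not> in_span_a N \<theta> h"
  shows "(cmod (cinner N (htil N \<theta> h) (steer' N \<theta>)))^2 =
    ((\<Sum>i=1..N. - fphase' N \<theta> i * Im (exp (\<i> * complex_of_real (fphase N \<theta> i)) * h i))^2
     + (\<Sum>i=1..N. fphase' N \<theta> i * Re (exp (\<i> * complex_of_real (fphase N \<theta> i)) * h i))^2)
    / ((\<Sum>i=1..N. (cmod (h i))^2)
       - ((\<Sum>i=1..N. Im (exp (\<i> * complex_of_real (fphase N \<theta> i)) * h i))^2
          + (\<Sum>i=1..N. Re (exp (\<i> * complex_of_real (fphase N \<theta> i)) * h i))^2) / real N)"
proof -
  have "(cmod (cinner N (htil N \<theta> h) (steer' N \<theta>)))^2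
      = (cmod (cinner N h (steer' N \<theta>)))^2 / cnorm2 N (hperp N \<theta> h)"
    using cnorm2_hperp_pos[OF assms(2)] unfolding cinner_htil_left[OF cinner_atil_steer']
    by (simp add: norm_divide power_divide)
  then show ?thesis
    unfolding cinner_steer'_coords cnorm2_hperp_coords[OF assms(1)] by (simp add: cmod_power2)
qed

section \<open>Quadratic forms of R_x and the closed form of the CRB\<close>

lemma qform_eq_cinner: "qform N u R v = cinner N u (\<lambda>i. \<Sum>k=1..N. R i k * v k)"
  unfolding qform_def cinner_def by (simp add: sum_distrib_left mult.assoc)

lemma qform_rank_sum:
  "qform N u (\<lambda>i k. A * x i * cnj (x k) + B * (\<Sum>l\<in>I. y l i * cnj (y l k))) v =
    A * cinner N u x * cinner N x v + B * (\<Sum>l\<in>I. cinner N u (y l) * cinner N (y l) v)"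
proof -
  have rows: "(\<lambda>i. \<Sum>k=1..N. (A * x i * cnj (x k) + B * (\<Sum>l\<in>I. y l i * cnj (y l k))) * v k) =
      (\<lambda>i. A * cinner N x v * x i + B * (\<Sum>l\<in>I. cinner N (y l) v * y l i))"
  proof (rule ext)
    fix i
    have "(\<Sum>k=1..N. (A * x i * cnj (x k) + B * (\<Sum>l\<in>I. y l i * cnj (y l k))) * v k) =
        (\<Sum>k=1..N. A * x i * (cnj (x k) * v k)) + (\<Sum>l\<in>I. \<Sum>k=1..N. B * y l i * (cnj (y l k) * v k))"
      by (simp add: sum.distrib algebra_simps sum_distrib_left sum.swap[of _ _ I])
    also have "\<dots> = A * cinner N x v * x i + B * (\<Sum>l\<in>I. cinner N (y l) v * y l i)"
      unfolding cinner_def by (simp add: sum_distrib_left mult_ac)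
    finally show "(\<Sum>k=1..N. (A * x i * cnj (x k) + B * (\<Sum>l\<in>I. y l i * cnj (y l k))) * v k) =
        A * cinner N x v * x i + B * (\<Sum>l\<in>I. cinner N (y l) v * y l i)" .
  qed
  show ?thesis
    unfolding qform_eq_cinner rows cinner_linear by (simp add: mult_ac)
qed

lemma qform_Rx:
  "qform N u (Rx N P \<tau> \<alpha> \<beta> \<theta> h t) v =
    complex_of_real (P * \<tau>) * cinner N u (tvec1 N \<alpha> \<beta> \<theta> h) * cinner N (tvec1 N \<alpha> \<beta> \<theta> h) v
    + complex_of_real ((1 - \<tau>) * P / (real N - 2)) * (\<Sum>l=3..N. cinner N u (t l) * cinner N (t l) v)"
  unfolding Rx_def[abs_def] by (rule qform_rank_sum)

lemma qform_Rx_diag: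
  "qform N v (Rx N P \<tau> \<alpha> \<beta> \<theta> h t) v = complex_of_real (P * \<tau> * (cmod (cinner N (tvec1 N \<alpha> \<beta> \<theta> h) v))^2
     + (1 - \<tau>) * P / (real N - 2) * (\<Sum>l=3..N. (cmod (cinner N (t l) v))^2))"
proof -
  have "cinner N v w * cinner N w v = complex_of_real ((cmod (cinner N w v))^2)" for w
    by (metis cnj_cinner complex_norm_square mult.commute)
  then show ?thesis
    unfolding qform_Rx by (simp add: of_real_sum)
qed

lemma qform_Rx_steer:
  assumes "N > 0" and "\<not> in_span_a N \<theta> h" and "is_compl_onb N \<theta> h t"
  shows "qform N (steer N \<theta>) (Rx N P \<tau> \<alpha> \<beta> \<theta> h t) v
           = complex_of_real (P * \<tau> * sqrt (real N)) * \<alpha> * cinner N (tvec1 N \<alpha> \<beta> \<theta> h) v"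
    and "qform N (steer N \<theta>) (Rx N P \<tau> \<alpha> \<beta> \<theta> h t) (steer N \<theta>)
           = complex_of_real (P * \<tau> * (cmod \<alpha>)^2 * real N)"
proof -
  have "cinner N (steer N \<theta>) (t l) = 0" if "l \<in> {3..N}" for l
    using assms(3) that unfolding is_compl_onb_def cinner_steer_left[OF assms(1)] by simp
  moreover have a_t1: "cinner N (steer N \<theta>) (tvec1 N \<alpha> \<beta> \<theta> h) = complex_of_real (sqrt (real N)) * \<alpha>"
    unfolding cinner_steer_left[OF assms(1)] tvec1_fun
    by (simp add: cinner_linear cinner_atil_atil[OF assms(1)] cinner_atil_htil[OF assms(1)])
  ultimately show v: "qform N (steer N \<theta>) (Rx N P \<tau> \<alpha> \<beta> \<theta> h t) v
      = complex_of_real (P * \<tau> * sqrt (real N)) * \<alpha> * cinner N (tvec1 N \<alpha> \<beta> \<theta> h) v" for v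
    unfolding qform_Rx by simp
  have "cinner N (tvec1 N \<alpha> \<beta> \<theta> h) (steer N \<theta>) = complex_of_real (sqrt (real N)) * cnj \<alpha>"
    using arg_cong[OF a_t1, of cnj] by (simp add: cnj_cinner)
  moreover have "complex_of_real (sqrt (real N)) * complex_of_real (sqrt (real N)) = of_nat N"
    by (simp flip: of_real_mult)
  ultimately show "qform N (steer N \<theta>) (Rx N P \<tau> \<alpha> \<beta> \<theta> h t) (steer N \<theta>)
      = complex_of_real (P * \<tau> * (cmod \<alpha>)^2 * real N)"
    unfolding v by (simp add: complex_norm_square mult_ac del: of_real_power)
qed

lemma CRB_eq_projection:
  assumes "N \<ge> 3" and "M > 0" and "P * \<tau> \<noteq> 0" and "\<alpha> \<noteq> 0"
    and nsp: "\<not> in_span_a N \<theta> h" and onb: "is_compl_onb N \<theta> h t"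
  shows "CRB N M L P \<tau> \<sigma> c3 \<alpha> \<beta> \<theta> h t = complex_of_real (crbQ \<sigma> c3 L * inverse
    (P * \<tau> * cnorm2 M (steer' M \<theta>) * real N * (cmod \<alpha>)^2
     + (1 - \<tau>) * P / (real N - 2) * real M
       * (cnorm2 N (steer' N \<theta>) - (cmod (cinner N (htil N \<theta> h) (steer' N \<theta>)))^2)))"
proof -
  have N0: "N > 0" using assms(1) by simp
  define R where "R = Rx N P \<tau> \<alpha> \<beta> \<theta> h t"
  define a where "a = steer N \<theta>"
  define a' where "a' = steer' N \<theta>"
  define nb' where "nb' = cnorm2 M (steer' M \<theta>)"
  define z where "z = cmod (cinner N (tvec1 N \<alpha> \<beta> \<theta> h) a')"
  define S where "S = (\<Sum>l=3..N. (cmod (cinner N (t l) a'))^2)"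
  define A where "A = P * \<tau> * (cmod \<alpha>)^2 * real N"
  define g2 where "g2 = (1 - \<tau>) * P / (real N - 2)"
  have CRB: "CRB N M L P \<tau> \<sigma> c3 \<alpha> \<beta> \<theta> h t = complex_of_real (crbQ \<sigma> c3 L) /
      (complex_of_real nb' * qform N a R a + complex_of_real (real M) * qform N a' R a'
       - complex_of_real ((cmod (complex_of_real (real M) * qform N a R a'))^2)
         / (complex_of_real (real M) * qform N a R a))"
    unfolding CRB_def Let_def cnorm2_steer R_def a_def a'_def nb'_def ..
  have qaa: "qform N a R a = complex_of_real A"
    unfolding a_def R_def A_def by (rule qform_Rx_steer(2)[OF N0 nsp onb])
  have qaa': "(cmod (complex_of_real (real M) * qform N a R a'))^2 = real M ^ 2 * (P * \<tau>) * A * z^2"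
    unfolding a_def R_def qform_Rx_steer(1)[OF N0 nsp onb] z_def A_def using N0
    by (simp add: norm_mult power_mult_distrib power2_eq_square mult_ac)
  have qa'a': "qform N a' R a' = complex_of_real (P * \<tau> * z^2 + g2 * S)"
    unfolding R_def qform_Rx_diag z_def S_def g2_def ..
  have "cnorm2 N a' = (cmod (cinner N (atil N \<theta>) a'))^2 + (cmod (cinner N (htil N \<theta> h) a'))^2 + S"
    unfolding S_def
    by (rule parseval[OF cinner_atil_atil[OF N0] cinner_htil_htil[OF nsp] cinner_atil_htil[OF N0]])
      (use onb in \<open>simp_all add: is_compl_onb_def\<close>)
  then have S_eq: "S = cnorm2 N a' - (cmod (cinner N (htil N \<theta> h) a'))^2"
    by (simp add: a'_def cinner_atil_steer')
  have "A \<noteq> 0" unfolding A_def using assms(1-4) by simp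
  then have schur: "nb' * A + real M * (P * \<tau> * z^2 + g2 * S) - real M ^ 2 * (P * \<tau>) * A * z^2 / (real M * A)
      = P * \<tau> * nb' * real N * (cmod \<alpha>)^2 + g2 * real M * S"
    unfolding A_def using assms(2) by (simp add: field_simps power2_eq_square)
  have "CRB N M L P \<tau> \<sigma> c3 \<alpha> \<beta> \<theta> h t = complex_of_real (crbQ \<sigma> c3 L)
      / complex_of_real (P * \<tau> * nb' * real N * (cmod \<alpha>)^2 + g2 * real M * S)"
    unfolding CRB qaa qaa' qa'a' schur[symmetric]
    by (simp only: of_real_mult of_real_add of_real_diff of_real_divide)
  then show ?thesis
    unfolding S_eq a'_def g2_def nb'_def by (simp add: divide_inverse)
qed

definition CRB_closed_form ::
  "nat \<Rightarrow> nat \<Rightarrow> nat \<Rightarrow> real \<Rightarrow> real \<Rightarrow> real \<Rightarrow> complex \<Rightarrow> complex \<Rightarrow> real \<Rightarrow> (nat \<Rightarrow> complex) \<Rightarrow> real" where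
  "CRB_closed_form N M L P \<tau> \<sigma> c3 \<alpha> \<theta> h = crbQ \<sigma> c3 L * inverse
     (P * \<tau> * cnorm2 M (steer' M \<theta>) * real N * (cmod \<alpha>)^2
      + (1 - \<tau>) * P / (real N - 2) * real M * (cnorm2 N (steer' N \<theta>) -
         ((\<Sum>i=1..N. - fphase' N \<theta> i * Im (exp (\<i> * complex_of_real (fphase N \<theta> i)) * h i))^2
          + (\<Sum>i=1..N. fphase' N \<theta> i * Re (exp (\<i> * complex_of_real (fphase N \<theta> i)) * h i))^2)
         / ((\<Sum>i=1..N. (cmod (h i))^2)
            - ((\<Sum>i=1..N. Im (exp (\<i> * complex_of_real (fphase N \<theta> i)) * h i))^2
               + (\<Sum>i=1..N. Re (exp (\<i> * complex_of_real (fphase N \<theta> i)) * h i))^2) / real N)))"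

lemma CRB_eq_closed_form:
  assumes "N \<ge> 3" and "M > 0" and "P * \<tau> \<noteq> 0" and "\<alpha> \<noteq> 0"
    and "\<not> in_span_a N \<theta> h" and "is_compl_onb N \<theta> h t"
  shows "CRB N M L P \<tau> \<sigma> c3 \<alpha> \<beta> \<theta> h t = complex_of_real (CRB_closed_form N M L P \<tau> \<sigma> c3 \<alpha> \<theta> h)"
  using assms(1) unfolding CRB_eq_projection[OF assms] CRB_closed_form_def
  by (simp add: cmod_cinner_htil_steer'_sq[OF _ assms(5)])

section \<open>The tail bound\<close>

lemma uLc_factor_pos:
  assumes "N \<ge> 3" and "M \<ge> 1" and "0 \<le> \<tau>" and "\<tau> < 1"
  shows "0 < (cmod \<alpha>)^2 * \<tau> * (real M ^ 2 - 1) + (real N ^ 2 - 1) * (1 - \<tau>) / (real N - 2)"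
proof -
  have "1 \<le> real M ^ 2" "9 \<le> real N ^ 2"
    using power_mono[of 1 "real M" 2] power_mono[of 3 "real N" 2] assms(1,2) by simp_all
  then show ?thesis using assms by (intro add_nonneg_pos) (auto intro!: divide_pos_pos)
qed

lemma crbQ_eq_uLc:
  assumes "N \<ge> 3" and "M \<ge> 1" and "L \<ge> 1" and "P > 0" and "0 \<le> \<tau>" and "\<tau> < 1"
    and "c3 \<noteq> 0" and "\<epsilon> > 0"
  shows "crbQ \<sigma> c3 L = \<epsilon> * (uLc N M L P \<tau> \<sigma> c3 \<alpha> \<epsilon>)^2 * (pi^2 * real M * real N / 12
    * (P * \<tau> * (cmod \<alpha>)^2 * (real M ^ 2 - 1) + (1 - \<tau>) * P / (real N - 2) * (real N ^ 2 - 1)))"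
proof -
  define K where "K = (cmod \<alpha>)^2 * \<tau> * (real M ^ 2 - 1) + (real N ^ 2 - 1) * (1 - \<tau>) / (real N - 2)"
  have K: "K > 0" unfolding K_def using uLc_factor_pos[OF assms(1,2,5,6)] .
  have u2: "(uLc N M L P \<tau> \<sigma> c3 \<alpha> \<epsilon>)^2 = 6 * \<sigma>^2 / (\<epsilon> * real M * real N * pi^2 * real L * P * (cmod c3)^2 * K)"
    unfolding uLc_def K_def[symmetric] using assms K
    by (simp add: power_mult_distrib power_inverse divide_inverse)
  have gain: "P * \<tau> * (cmod \<alpha>)^2 * (real M ^ 2 - 1) + (1 - \<tau>) * P / (real N - 2) * (real N ^ 2 - 1) = P * K"
    unfolding K_def by (simp add: algebra_simps)
  show ?thesis
    unfolding gain crbQ_def u2 using assms K by (simp add: field_simps power2_eq_square)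
qed

lemma CRB_closed_form_gt_of_cos_less:
  assumes "N \<ge> 3" and "M \<ge> 2" and "L \<ge> 1" and "P > 0" and "0 < \<tau>" and "\<tau> < 1"
    and "c3 \<noteq> 0" and "\<alpha> \<noteq> 0" and "\<epsilon> > 0" and "\<not> in_span_a N \<theta> h"
    and "0 < cos \<theta>" and "cos \<theta> < uLc N M L P \<tau> \<sigma> c3 \<alpha> \<epsilon>"
  shows "\<epsilon> < CRB_closed_form N M L P \<tau> \<sigma> c3 \<alpha> \<theta> h"
proof -
  define c where "c = cos \<theta>"
  define u where "u = uLc N M L P \<tau> \<sigma> c3 \<alpha> \<epsilon>"
  define Y where "Y = (cmod (cinner N (htil N \<theta> h) (steer' N \<theta>)))^2"
  define G where "G = (1 - \<tau>) * P / (real N - 2)"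
  define C where "C = pi^2 * real M * real N / 12
    * (P * \<tau> * (cmod \<alpha>)^2 * (real M ^ 2 - 1) + G * (real N ^ 2 - 1))"
  define D where "D = P * \<tau> * (pi^2 * c^2 * real M * (real M ^ 2 - 1) / 12) * real N * (cmod \<alpha>)^2
    + G * real M * (pi^2 * c^2 * real N * (real N ^ 2 - 1) / 12 - Y)"
  have N0: "N > 0" and M1: "M \<ge> 1" using assms(1,2) by simp_all
  have Y: "0 \<le> Y" "Y \<le> pi^2 * c^2 * real N * (real N ^ 2 - 1) / 12"
    unfolding Y_def c_def cnorm2_steer'[symmetric]
    by (simp_all add: bessel_inequality cinner_htil_htil assms(10))
  have "real N - 2 > 0" "4 \<le> real M ^ 2" "9 \<le> real N ^ 2"
    using assms(1,2) power_mono[of 2 "real M" 2] power_mono[of 3 "real N" 2] by simp_all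
  then have G: "G \<ge> 0" and M_gain: "0 < P * \<tau> * (cmod \<alpha>)^2 * (real M ^ 2 - 1)" and "real N ^ 2 - 1 \<ge> 0"
    unfolding G_def using assms(4-6,8) by simp_all
  then have "0 < P * \<tau> * (cmod \<alpha>)^2 * (real M ^ 2 - 1) + G * (real N ^ 2 - 1)"
    by (simp add: add_pos_nonneg)
  then have C: "C > 0" unfolding C_def using assms(1,2) by simp
  have "P * \<tau> * (pi^2 * c^2 * real M * (real M ^ 2 - 1) / 12) * real N * (cmod \<alpha>)^2
      = c^2 * pi^2 * real M * real N / 12 * (P * \<tau> * (cmod \<alpha>)^2 * (real M ^ 2 - 1))"
    by (simp add: field_simps)
  also have "\<dots> > 0"
    using M_gain assms(1,2,11) unfolding c_def by simp
  moreover have "0 \<le> G * real M * (pi^2 * c^2 * real N * (real N ^ 2 - 1) / 12 - Y)"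
    using G Y(2) by simp
  ultimately have D_pos: "D > 0" unfolding D_def by linarith
  have "D = c^2 * C - G * real M * Y"
    unfolding D_def C_def by (simp add: field_simps)
  also have "\<dots> \<le> c^2 * C"
    using G Y(1) by simp
  also have "\<dots> < u^2 * C"
    using assms(11,12) C unfolding c_def u_def by (intro mult_strict_right_mono power_strict_mono) auto
  finally have "D < u^2 * C" .
  moreover have "crbQ \<sigma> c3 L = \<epsilon> * (u^2 * C)"
    unfolding crbQ_eq_uLc[OF assms(1) M1 assms(3,4) less_imp_le[OF assms(5)] assms(6,7,9), where \<alpha> = \<alpha>]
      u_def C_def G_def
    by (simp add: mult.assoc)
  ultimately have "\<epsilon> * D < crbQ \<sigma> c3 L"
    using assms(9) by simp
  then have "\<epsilon> < crbQ \<sigma> c3 L * inverse D"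
    using D_pos by (simp add: field_simps)
  moreover have "CRB_closed_form N M L P \<tau> \<sigma> c3 \<alpha> \<theta> h = crbQ \<sigma> c3 L * inverse D"
    unfolding CRB_closed_form_def cnorm2_steer' cmod_cinner_htil_steer'_sq[OF N0 assms(10), symmetric]
    by (simp only: D_def Y_def c_def G_def)
  ultimately show ?thesis by simp
qed


lemma sets_CN01 [measurable_cong]: "sets CN01 = sets borel"
  unfolding CN01_def by simp

lemma space_CN01 [simp]: "space CN01 = UNIV"
  unfolding CN01_def by simp

lemma prob_space_CN01: "prob_space CN01"
proof
  define g where "g = (\<lambda>(b::complex) (y::real). ennreal (normal_density 0 (sqrt (1/2)) y))"
  have g_integral: "(\<integral>\<^sup>+y. g b y \<partial>lborel) = 1" for b
  proof -
    interpret prob_space "density lborel (normal_density 0 (sqrt (1/2)))"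
      by (rule prob_space_normal_density) simp
    show ?thesis using emeasure_space_1 unfolding g_def by (simp add: emeasure_density)
  qed
  have density_factors: "ennreal (exp (- ((cmod z)^2)) / pi) = (\<Prod>b\<in>Basis. g b (z \<bullet> b))" for z :: complex
  proof -
    have "normal_density 0 (sqrt (1/2)) (Re z) * normal_density 0 (sqrt (1/2)) (Im z) = exp (- ((cmod z)^2)) / pi"
      unfolding normal_density_def cmod_power2
      by (simp add: real_sqrt_divide exp_add[symmetric] field_simps)
    then show ?thesis
      unfolding g_def by (simp add: Basis_complex_def ennreal_mult[symmetric])
  qed
  have "emeasure CN01 (space CN01) = (\<integral>\<^sup>+z. ennreal (exp (- ((cmod z)^2)) / pi) \<partial>lborel)"
    unfolding CN01_def by (subst emeasure_density) auto
  also have "\<dots> = (\<integral>\<^sup>+z. (\<Prod>b\<in>Basis. g b (z \<bullet> b)) \<partial>lborel)"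
    by (simp only: density_factors)
  also have "\<dots> = (\<Prod>b\<in>(Basis::complex set). (\<integral>\<^sup>+y. g b y \<partial>lborel))"
    by (rule nn_integral_lborel_prod) (auto simp: g_def)
  finally show "emeasure CN01 (space CN01) = 1" by (simp add: g_integral)
qed

lemma prob_space_joint_law: "prob_space (joint_law N)"
  unfolding joint_law_def
  by (intro prob_space_pair prob_space_PiM prob_space_uniform_measure prob_space_CN01) auto

lemma emeasure_CN01_singleton: "emeasure CN01 {p} = 0"
proof -
  have "{p} \<in> null_sets CN01"
    unfolding CN01_def using AE_lborel_singleton[of p]
    by (subst null_sets_density_iff) (auto elim: AE_mp)
  then show ?thesis by auto
qed

lemma emeasure_PiM_CN01_proportional:
  assumes "finite I" and "j \<in> I" and "k \<in> I" and "j \<noteq> k"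
  shows "emeasure (\<Pi>\<^sub>M i\<in>I. CN01) {h \<in> space (\<Pi>\<^sub>M i\<in>I. CN01). h j = c * h k} = 0"
proof -
  interpret CN01: prob_space CN01 by (rule prob_space_CN01)
  interpret product_sigma_finite "\<lambda>_. CN01"
    unfolding product_sigma_finite_def by (auto intro: CN01.sigma_finite_measure_axioms)
  define A where "A = {h \<in> space (\<Pi>\<^sub>M i\<in>I. CN01). h j = c * h k}"
  have I: "I = insert j (I - {j})" using assms(2) by auto
  have A_sets: "A \<in> sets (\<Pi>\<^sub>M i\<in>I. CN01)"
    unfolding A_def using assms(2,3) by measurable
  \<comment> \<open>Integrate out coordinate j first: every section of A is a single point.\<close>
  have "emeasure (\<Pi>\<^sub>M i\<in>I. CN01) A = (\<integral>\<^sup>+h. indicator A h \<partial>(\<Pi>\<^sub>M i\<in>I. CN01))"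
    using A_sets by simp
  also have "\<dots> = (\<integral>\<^sup>+x. (\<integral>\<^sup>+y. indicator A (x(j := y)) \<partial>CN01) \<partial>(\<Pi>\<^sub>M i\<in>I - {j}. CN01))"
    by (subst I, rule product_nn_integral_insert) (use assms(1) A_sets I in auto)
  also have "\<dots> = (\<integral>\<^sup>+x. (\<integral>\<^sup>+y. indicator {c * x k} y \<partial>CN01) \<partial>(\<Pi>\<^sub>M i\<in>I - {j}. CN01))"
  proof (intro nn_integral_cong)
    fix x y assume "x \<in> space (\<Pi>\<^sub>M i\<in>I - {j}. CN01)"
    then have "x(j := y) \<in> space (\<Pi>\<^sub>M i\<in>I. CN01)"
      using assms(2) by (auto simp: space_PiM PiE_def extensional_def)
    then show "indicator A (x(j := y)) = (indicator {c * x k} y :: ennreal)"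
      unfolding A_def using assms(4) by (auto simp: indicator_def)
  qed
  finally show ?thesis unfolding A_def by (simp add: emeasure_CN01_singleton)
qed

lemma null_sets_joint_law_proportional:
  assumes "N \<ge> 2" and [measurable]: "g \<in> borel_measurable borel"
  shows "{x \<in> space (joint_law N). snd x 2 = g (fst x) * snd x 1} \<in> null_sets (joint_law N)"
proof -
  interpret Omega: prob_space "\<Pi>\<^sub>M i\<in>{1..N}. CN01" by (intro prob_space_PiM prob_space_CN01)
  define Z where "Z = {x \<in> space (joint_law N). snd x 2 = g (fst x) * snd x 1}"
  have ij: "2 \<in> {1..N}" "1 \<in> {1..N}" using assms(1) by auto
  have Z_sets: "Z \<in> sets (joint_law N)" unfolding Z_def joint_law_def using ij by measurable
  have "emeasure (joint_law N) Z =
      (\<integral>\<^sup>+\<theta>. emeasure (\<Pi>\<^sub>M i\<in>{1..N}. CN01) (Pair \<theta> -` Z) \<partial>uniform_measure lborel {-pi/2<..<pi/2})"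
    using Z_sets unfolding joint_law_def by (rule Omega.emeasure_pair_measure_alt)
  also have "\<dots> = 0"
  proof (rule nn_integral_zero')
    show "AE \<theta> in uniform_measure lborel {-pi/2<..<pi/2}. emeasure (\<Pi>\<^sub>M i\<in>{1..N}. CN01) (Pair \<theta> -` Z) = 0"
    proof (rule AE_I2)
      fix \<theta>
      have "Pair \<theta> -` Z = {h \<in> space (\<Pi>\<^sub>M i\<in>{1..N}. CN01). h 2 = g \<theta> * h 1}"
        unfolding Z_def joint_law_def by (auto simp: space_pair_measure)
      then show "emeasure (\<Pi>\<^sub>M i\<in>{1..N}. CN01) (Pair \<theta> -` Z) = 0"
        using emeasure_PiM_CN01_proportional[OF _ ij] by simp
    qed
  qed
  finally show ?thesis using Z_sets unfolding Z_def by (simp add: null_sets_def)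
qed


lemma in_span_a_iff:
  assumes "N \<ge> 1"
  shows "in_span_a N \<theta> h \<longleftrightarrow> (\<forall>i\<in>{1..N}. h i = h 1 / steer N \<theta> 1 * steer N \<theta> i)"
proof
  assume "in_span_a N \<theta> h"
  then obtain c where c: "\<forall>i\<in>{1..N}. h i = c * steer N \<theta> i" unfolding in_span_a_def by blast
  then have "h 1 = c * steer N \<theta> 1" using assms by simp
  then have "h 1 / steer N \<theta> 1 = c" by simp
  with c show "\<forall>i\<in>{1..N}. h i = h 1 / steer N \<theta> 1 * steer N \<theta> i" by simp
next
  assume "\<forall>i\<in>{1..N}. h i = h 1 / steer N \<theta> 1 * steer N \<theta> i"
  then show "in_span_a N \<theta> h" unfolding in_span_a_def by blast
qed

lemma borel_measurable_steer [measurable]: "(\<lambda>\<theta>. steer N \<theta> i) \<in> borel_measurable borel"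
  unfolding steer_def fphase_def by measurable

lemma pred_in_span_a:
  assumes "N \<ge> 1"
  shows "Measurable.pred (joint_law N) (\<lambda>x. in_span_a N (fst x) (snd x))"
proof -
  have "Measurable.pred (joint_law N) (\<lambda>x. snd x i = snd x 1 / steer N (fst x) 1 * steer N (fst x) i)"
    if "i \<in> {1..N}" for i
  proof -
    have "1 \<in> {1..N}" using assms by simp
    with that show ?thesis unfolding joint_law_def by measurable
  qed
  then show ?thesis unfolding in_span_a_iff[OF assms] by (intro pred_intros_finite) auto
qed

lemma borel_measurable_CRB_closed_form [measurable]:
  "(\<lambda>x. CRB_closed_form N M L P \<tau> \<sigma> c3 \<alpha> (fst x) (snd x)) \<in> borel_measurable (joint_law N)"
  unfolding CRB_closed_form_def cnorm2_steer' fphase_def fphase'_def joint_law_def by measurable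

lemma null_sets_joint_law_in_span_a:
  assumes "N \<ge> 2"
  shows "{x \<in> space (joint_law N). in_span_a N (fst x) (snd x)} \<in> null_sets (joint_law N)"
proof (rule null_sets_subset)
  have N1: "N \<ge> 1" and two: "2 \<in> {1..N}" using assms by simp_all
  have "(\<lambda>\<theta>. steer N \<theta> 2 / steer N \<theta> 1) \<in> borel_measurable borel"
    by measurable
  from null_sets_joint_law_proportional[OF assms this]
  show "{x \<in> space (joint_law N). snd x 2 = steer N (fst x) 2 / steer N (fst x) 1 * snd x 1}
      \<in> null_sets (joint_law N)" .
  show "{x \<in> space (joint_law N). in_span_a N (fst x) (snd x)} \<in> sets (joint_law N)"
    using pred_in_span_a[OF N1] unfolding pred_def .
  show "{x \<in> space (joint_law N). in_span_a N (fst x) (snd x)}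
      \<subseteq> {x \<in> space (joint_law N). snd x 2 = steer N (fst x) 2 / steer N (fst x) 1 * snd x 1}"
  proof safe
    fix \<theta> h assume "in_span_a N \<theta> h"
    then have "h 2 = h 1 / steer N \<theta> 1 * steer N \<theta> 2"
      using in_span_a_iff[OF N1] two by blast
    then show "h 2 = steer N \<theta> 2 / steer N \<theta> 1 * h 1" by simp
  qed
qed

lemma measure_uniform_cos_less:
  assumes "0 < u" and "u < 1"
  shows "measure (uniform_measure lborel {-pi/2<..<pi/2}) {\<theta> \<in> {-pi/2<..<pi/2}. cos \<theta> < u}
    = 2 / pi * arcsin u"
proof -
  define a where "a = arccos u"
  have a: "a = pi/2 - arcsin u" "cos a = u"
    unfolding a_def using assms by (simp add: arccos_arcsin_eq, simp)
  have "0 < arcsin u" "arcsin u < pi/2"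
    using arcsin_less_mono[of 0 u] arcsin_less_mono[of u 1] assms by auto
  then have a_bounds: "0 < a" "a < pi/2" using a by auto
  have "cos \<theta> < u \<longleftrightarrow> a < \<bar>\<theta>\<bar>" if "\<theta> \<in> {-pi/2<..<pi/2}" for \<theta>
  proof -
    have "cos \<theta> = cos \<bar>\<theta>\<bar>" by (cases "\<theta> < 0") simp_all
    moreover have "cos \<bar>\<theta>\<bar> < cos a \<longleftrightarrow> a < \<bar>\<theta>\<bar>"
      using that a_bounds by (intro cos_mono_less_eq) auto
    ultimately show ?thesis using a(2) by simp
  qed
  then have A: "{\<theta> \<in> {-pi/2<..<pi/2}. cos \<theta> < u} = {-pi/2<..<-a} \<union> {a<..<pi/2}"
    using a_bounds by (auto simp: abs_if split: if_split_asm)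
  have "measure lborel ({-pi/2<..<-a} \<union> {a<..<pi/2}) = 2 * arcsin u"
    using a_bounds a by (subst measure_Union) auto
  moreover have "{-pi/2<..<pi/2} \<inter> ({-pi/2<..<-a} \<union> {a<..<pi/2}) = {-pi/2<..<-a} \<union> {a<..<pi/2}"
    using a_bounds by auto
  ultimately show ?thesis
    unfolding A by (subst measure_uniform_measure) auto
qed


lemma uLc_pos:
  assumes "N \<ge> 3" and "M \<ge> 2" and "L \<ge> 1" and "P > 0" and "0 \<le> \<tau>" and "\<tau> < 1"
    and "\<sigma> > 0" and "c3 \<noteq> 0" and "\<epsilon> > 0"
  shows "uLc N M L P \<tau> \<sigma> c3 \<alpha> \<epsilon> > 0"
proof -
  have "0 < (cmod \<alpha>)^2 * \<tau> * (real M ^ 2 - 1) + (real N ^ 2 - 1) * (1 - \<tau>) / (real N - 2)"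
    using assms(1,2,5,6) by (intro uLc_factor_pos) auto
  then have "0 < \<epsilon> * real M * real N * pi^2 * real L * P * (cmod c3)^2 *
      ((cmod \<alpha>)^2 * \<tau> * (real M ^ 2 - 1) + (real N ^ 2 - 1) * (1 - \<tau>) / (real N - 2))"
    using assms by (intro mult_pos_pos) auto
  then show ?thesis unfolding uLc_def using assms(7) by simp
qed

lemma measure_CRB_gt_ge_PLc:
  assumes "N \<ge> 3" and "M \<ge> 2" and "L \<ge> 1" and "P > 0" and "0 < \<tau>" and "\<tau> < 1"
    and "\<sigma> > 0" and "c3 \<noteq> 0" and "\<alpha> \<noteq> 0" and "\<epsilon> > 0"
    and tb: "\<And>\<theta> h. \<theta> \<in> {-pi/2<..<pi/2} \<Longrightarrow> \<not> in_span_a N \<theta> h \<Longrightarrow> is_compl_onb N \<theta> h (tb \<theta> h)"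
  shows "PLc N M L P \<tau> \<sigma> c3 \<alpha> \<epsilon> \<le> measure (joint_law N)
    {x \<in> space (joint_law N). fst x \<in> {-pi/2<..<pi/2} \<and> \<not> in_span_a N (fst x) (snd x) \<and>
       Re (CRB N M L P \<tau> \<sigma> c3 \<alpha> \<beta> (fst x) (snd x) (tb (fst x) (snd x))) > \<epsilon>}"
    (is "_ \<le> measure _ ?E")
proof (cases "uLc N M L P \<tau> \<sigma> c3 \<alpha> \<epsilon> < 1")
  case False
  then show ?thesis by (simp add: PLc_def)
next
  case True
  define u where "u = uLc N M L P \<tau> \<sigma> c3 \<alpha> \<epsilon>"
  define A where "A = {\<theta> \<in> {-pi/2<..<pi/2}. cos \<theta> < u} \<times> space (\<Pi>\<^sub>M i\<in>{1..N}. CN01)"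
  interpret J: prob_space "joint_law N" by (rule prob_space_joint_law)
  interpret Omega: prob_space "\<Pi>\<^sub>M i\<in>{1..N}. CN01" by (intro prob_space_PiM prob_space_CN01)
  have u: "0 < u" "u < 1" unfolding u_def using uLc_pos assms True by auto
  have M0: "M > 0" and PT: "P * \<tau> \<noteq> 0" and N1: "N \<ge> 1" and N2: "N \<ge> 2" using assms by auto
  have E_eq: "?E = {x \<in> space (joint_law N). fst x \<in> {-pi/2<..<pi/2} \<and> \<not> in_span_a N (fst x) (snd x) \<and>
      \<epsilon> < CRB_closed_form N M L P \<tau> \<sigma> c3 \<alpha> (fst x) (snd x)}"
    using CRB_eq_closed_form[OF assms(1) M0 PT assms(9) _ tb] by auto
  have [measurable]: "fst \<in> joint_law N \<rightarrow>\<^sub>M borel"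
    unfolding joint_law_def by measurable
  have E_sets: "?E \<in> sets (joint_law N)"
    unfolding E_eq using pred_in_span_a[OF N1] by measurable
  have cos_sets: "{\<theta> \<in> {-pi/2<..<pi/2}. cos \<theta> < u} \<in> sets (uniform_measure lborel {-pi/2<..<pi/2})"
    by measurable
  have "emeasure (joint_law N) A = emeasure (uniform_measure lborel {-pi/2<..<pi/2}) {\<theta> \<in> {-pi/2<..<pi/2}. cos \<theta> < u}"
    unfolding A_def joint_law_def Omega.emeasure_pair_measure_Times[OF cos_sets sets.top] Omega.emeasure_space_1
    by simp
  then have measure_A: "measure (joint_law N) A = 2 / pi * arcsin u"
    using measure_uniform_cos_less[OF u] unfolding measure_def by simp
  have "AE x in joint_law N. x \<in> A \<longrightarrow> x \<in> ?E"
    using AE_not_in[OF null_sets_joint_law_in_span_a[OF N2]]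
  proof eventually_elim
    case (elim x)
    show ?case
    proof
      assume "x \<in> A"
      then have x: "x \<in> space (joint_law N)" "fst x \<in> {-pi/2<..<pi/2}" "cos (fst x) < u"
        unfolding A_def joint_law_def by (auto simp: space_pair_measure)
      then have "\<not> in_span_a N (fst x) (snd x)" using elim by simp
      moreover have "0 < cos (fst x)" using x(2) by (intro cos_gt_zero_pi) auto
      ultimately show "x \<in> ?E"
        unfolding E_eq using x CRB_closed_form_gt_of_cos_less[OF assms(1-6,8-10)] unfolding u_def by auto
    qed
  qed
  then have "measure (joint_law N) A \<le> measure (joint_law N) ?E"
    by (rule J.finite_measure_mono_AE[OF _ E_sets])
  then show ?thesis
    using True measure_A unfolding PLc_def u_def by simp
qed

theorem lemma2:
  fixes N M L :: nat and P \<tau> \<sigma> :: real and c3 \<alpha> \<beta> :: complex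
  assumes "N \<ge> 3" and "M \<ge> 2" and "L \<ge> 1" and "P > 0" and "0 < \<tau>" and "\<tau> < 1"
    and "\<sigma> > 0" and "c3 \<noteq> 0" and "(cmod \<alpha>)^2 + (cmod \<beta>)^2 = 1" and "\<alpha> \<noteq> 0"
  shows
   "(\<forall>\<theta> h t. \<theta> \<in> {-pi/2<..<pi/2} \<and> \<not> in_span_a N \<theta> h \<and> is_compl_onb N \<theta> h t \<longrightarrow>
      (let \<gamma>1 = P * \<tau>; \<gamma>2 = (1 - \<tau>) * P / (real N - 2);
           r = (\<lambda>i. Re (exp (\<i> * complex_of_real (fphase N \<theta> i)) * h i));
           ti = (\<lambda>i. Im (exp (\<i> * complex_of_real (fphase N \<theta> i)) * h i));
           k = (\<lambda>i. (cmod (h i))^2);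
           R = (\<Sum>i=1..N. r i); T = (\<Sum>i=1..N. ti i); K = (\<Sum>i=1..N. k i);
           nb' = cnorm2 M (steer' M \<theta>); na' = cnorm2 N (steer' N \<theta>)
       in CRB N M L P \<tau> \<sigma> c3 \<alpha> \<beta> \<theta> h t =
            complex_of_real (crbQ \<sigma> c3 L * inverse
              (\<gamma>1 * nb' * real N * (cmod \<alpha>)^2
               + \<gamma>2 * real M * (na' -
                  ((\<Sum>i=1..N. - fphase' N \<theta> i * ti i)^2 + (\<Sum>i=1..N. fphase' N \<theta> i * r i)^2)
                  / (K - (T^2 + R^2) / real N))))
          \<and> nb' = pi^2 * (cos \<theta>)^2 * real M * (real M ^ 2 - 1) / 12
          \<and> na' = pi^2 * (cos \<theta>)^2 * real N * (real N ^ 2 - 1) / 12))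
   \<and> (\<forall>\<epsilon> tb. \<epsilon> > 0 \<and>
        (\<forall>\<theta> h. \<theta> \<in> {-pi/2<..<pi/2} \<and> \<not> in_span_a N \<theta> h \<longrightarrow> is_compl_onb N \<theta> h (tb \<theta> h)) \<longrightarrow>
      measure (joint_law N)
        {x \<in> space (joint_law N). fst x \<in> {-pi/2<..<pi/2} \<and> \<not> in_span_a N (fst x) (snd x) \<and>
           Re (CRB N M L P \<tau> \<sigma> c3 \<alpha> \<beta> (fst x) (snd x) (tb (fst x) (snd x))) > \<epsilon>}
      \<ge> PLc N M L P \<tau> \<sigma> c3 \<alpha> \<epsilon>)"
  apply (intro conjI allI impI)
  subgoal
    unfolding Let_def using assms
    by (intro conjI CRB_eq_closed_form[unfolded CRB_closed_form_def] cnorm2_steer') auto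
  subgoal
    using measure_CRB_gt_ge_PLc[OF assms(1-8,10)] by blast
  done

end
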